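(* Let $n,m$ be positive integers, let $\mathbf{A}_c\in\mathbb{Z}^{m\times 2n}$ and $\mathbf{b}_c\in\mathbb{Z}^{m}$, and let $c[\bar x,\bar x']$ be the linear constraint $\mathbf{A}_c\langle \mathbf{x},\mathbf{x}'\rangle\ge \mathbf{b}_c$ in the $2n$ variables $\bar x=(x_1,\dots,x_n)$, $\bar x'=(x'_1,\dots,x'_n)$. Assume $c$ is satisfiable over $\mathbb{Q}_+^{2n}$. Consider the binary $\mathrm{CLP}(\mathbb{Q}_+)$ clause $C$: $p(\bar x)\mathrel{:-} c[\bar x,\bar x'],\,p(\bar x')$, where $p$ is an $n$-ary predicate. Define $$\mathrm{plrf}(C)=\Bigl\{\boldsymbol\mu\in\mathbb{Q}_+^n \;\Bigm|\; \forall \bar x,\bar x'\in\mathbb{Q}_+^n:\ c[\bar x,\bar x']\implies \sum_{i=1}^n\mu_i x_i-\sum_{i=1}^n \mu_i x'_i\ge 1\Bigr\}$$ and let $\mathrm{svg}(C)$ be the set of all $\boldsymbol\mu\in\mathbb{Q}_+^n$ for which there exists $\mathbf{y}\in\mathbb{Q}^m$ such that $\langle\mathbf{y},\boldsymbol\mu\rangle$ satisfies the system $$\begin{pmatrix}\mathbf{A}_c^{\mathrm T} & \begin{matrix}-\mathbf{I}_n\\ \mathbf{I}_n\end{matrix}\\ -\mathbf{b}_c^{\mathrm T} & \mathbf{0}\end{pmatrix}\langle\mathbf{y},\boldsymbol\mu\rangle\le\begin{pmatrix}\mathbf{0}\\-1\end{pmatrix},\qquad \langle\mathbf{y},\boldsymbol\mu\rangle\ge\mathbf{0},$$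 i.e. $\mathbf{y}\ge \mathbf 0$, $\mathbf{A}_c^{\mathrm T}\mathbf{y}\le\langle\boldsymbol\mu,-\boldsymbol\mu\rangle$ componentwise, and $\mathbf{b}_c^{\mathrm T}\mathbf{y}\ge 1$. Then $\mathrm{plrf}(C)=\mathrm{svg}(C)$.
   Context: $\mathbb{Q}_+$ denotes the nonnegative rationals. For vectors $\mathbf v\in\mathbb{Q}^a,\mathbf w\in\mathbb{Q}^b$, $\langle\mathbf v,\mathbf w\rangle\in\mathbb{Q}^{a+b}$ denotes their concatenation (as a column vector); vector inequalities are componentwise; $\mathbf{I}_n$ is the $n\times n$ identity matrix and $\mathbf 0$ a zero matrix/vector of appropriate size. The constraint $c[\bar x,\bar x']$ is identified with the vector inequality $\mathbf{A}_c\langle\mathbf x,\mathbf x'\rangle\ge\mathbf b_c$ where $\mathbf x=\langle x_1,\dots,x_n\rangle$, $\mathbf x'=\langle x'_1,\dots,x'_n\rangle$. *)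

theory Defs
  imports "HOL-Analysis.Analysis"
begin

text \<open>Index types: 'n (n variables), 'm (m constraints); the 2n columns of A_c are
  indexed by 'n + 'n, Inl i standing for x_i and Inr i for x'_i.\<close>

definition vcat :: "'a^'n \<Rightarrow> 'a^'k \<Rightarrow> 'a^('n + 'k)" where
  "vcat v w = (\<chi> k. case k of Inl i \<Rightarrow> v $ i | Inr j \<Rightarrow> w $ j)"

definition ratmat :: "int^'c^'r \<Rightarrow> rat^'c^'r" where
  "ratmat A = (\<chi> i j. of_int (A $ i $ j))"

definition ratvec :: "int^'r \<Rightarrow> rat^'r" where
  "ratvec b = (\<chi> i. of_int (b $ i))"

definition vnonneg :: "rat^'k \<Rightarrow> bool" where
  "vnonneg v \<longleftrightarrow> (\<forall>i. 0 \<le> v $ i)"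

definition vle :: "rat^'k \<Rightarrow> rat^'k \<Rightarrow> bool" where
  "vle v w \<longleftrightarrow> (\<forall>i. v $ i \<le> w $ i)"

definition constr :: "int^('n + 'n)^'m \<Rightarrow> int^'m \<Rightarrow> rat^'n \<Rightarrow> rat^'n \<Rightarrow> bool" where
  "constr A b x x' \<longleftrightarrow> vle (ratvec b) (ratmat A *v vcat x x')"

definition plrf :: "int^('n + 'n)^'m \<Rightarrow> int^'m \<Rightarrow> (rat^'n) set" where
  "plrf A b = {\<mu>. vnonneg \<mu> \<and>
     (\<forall>x x'. vnonneg x \<and> vnonneg x' \<and> constr A b x x' \<longrightarrow>
        (\<Sum>i\<in>UNIV. \<mu> $ i * x $ i) - (\<Sum>i\<in>UNIV. \<mu> $ i * x' $ i) \<ge> 1)}"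

definition svg :: "int^('n + 'n)^'m \<Rightarrow> int^'m \<Rightarrow> (rat^'n) set" where
  "svg A b = {\<mu>. vnonneg \<mu> \<and>
     (\<exists>y :: rat^'m. vnonneg y \<and> vle (transpose (ratmat A) *v y) (vcat \<mu> (- \<mu>))
        \<and> (\<Sum>i\<in>UNIV. ratvec b $ i * y $ i) \<ge> 1)}"

end

theory Submission
  imports Defs
begin

(* Weak duality gives svg(C) \<subseteq> plrf(C). Conversely, \<mu> \<in> plrf(C) says that the bound
   \<mu>\<cdot>x - \<mu>\<cdot>x' \<ge> 1 is implied by the satisfiable system A w \<ge> b, w \<ge> 0, and the affine Farkas
   lemma turns such an implied bound into a dual certificate y. Farkas' lemma comes from
   Fourier-Motzkin elimination: an infeasible finite system of linear inequalities has a
   nonnegative combination reading 0 \<ge> (positive). For the dual system, the weight \<kappa> of the row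
   b\<cdot>y \<ge> 1 in that combination is either positive, and rescaling gives a solution of the primal
   system violating the bound, or zero, and the combination is a ray along which the objective
   decreases without bound from any primal solution; that case is where satisfiability of c is
   needed. *)

definition ineq_holds :: "'v set \<Rightarrow> ('v \<Rightarrow> 'a::linordered_field) \<Rightarrow> ('v \<Rightarrow> 'a) \<times> 'a \<Rightarrow> bool" where
  "ineq_holds V y p \<longleftrightarrow> snd p \<le> (\<Sum>j\<in>V. fst p j * y j)"

inductive_set ineq_cone :: "(('v \<Rightarrow> 'a::linordered_field) \<times> 'a) set \<Rightarrow> (('v \<Rightarrow> 'a) \<times> 'a) set"
  for S where
  ineq_cone_zero: "(\<lambda>_. 0, 0) \<in> ineq_cone S"
| ineq_cone_add: "p \<in> S \<Longrightarrow> 0 \<le> c \<Longrightarrow> q \<in> ineq_cone S \<Longrightarrow>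
    (\<lambda>j. fst q j + c * fst p j, snd q + c * snd p) \<in> ineq_cone S"

lemma ineq_cone_base: "p \<in> S \<Longrightarrow> p \<in> ineq_cone S"
  using ineq_cone_add[OF _ _ ineq_cone_zero, of p S 1] by (cases p) simp

lemma ineq_cone_add_closed:
  "q \<in> ineq_cone S \<Longrightarrow> r \<in> ineq_cone S \<Longrightarrow> (\<lambda>j. fst r j + fst q j, snd r + snd q) \<in> ineq_cone S"
proof (induction rule: ineq_cone.induct)
  case (ineq_cone_add p c q)
  from ineq_cone.ineq_cone_add[OF ineq_cone_add(1,2) ineq_cone_add.IH[OF ineq_cone_add.prems]]
  show ?case
    by (simp add: add.assoc)
qed simp

lemma ineq_cone_scale_closed:
  "q \<in> ineq_cone S \<Longrightarrow> 0 \<le> d \<Longrightarrow> (\<lambda>j. d * fst q j, d * snd q) \<in> ineq_cone S"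
proof (induction rule: ineq_cone.induct)
  case ineq_cone_zero then show ?case using ineq_cone.ineq_cone_zero by simp
next
  case (ineq_cone_add p c q)
  from ineq_cone.ineq_cone_add[OF ineq_cone_add(1) _ ineq_cone_add.IH[OF ineq_cone_add.prems],
      of "d * c"] ineq_cone_add.prems ineq_cone_add(2)
  show ?case by (simp add: algebra_simps)
qed

lemma ineq_cone_trans: "q \<in> ineq_cone S' \<Longrightarrow> S' \<subseteq> ineq_cone S \<Longrightarrow> q \<in> ineq_cone S"
proof (induction rule: ineq_cone.induct)
  case ineq_cone_zero show ?case by (rule ineq_cone.ineq_cone_zero)
next
  case (ineq_cone_add p c q)
  have "p \<in> ineq_cone S" using ineq_cone_add by auto
  from ineq_cone_add_closed[OF ineq_cone_scale_closed[OF this ineq_cone_add(2)]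
      ineq_cone_add.IH[OF ineq_cone_add.prems]]
  show ?case by simp
qed

lemma ineq_cone_coord_zero: "q \<in> ineq_cone S \<Longrightarrow> \<forall>p\<in>S. fst p x = 0 \<Longrightarrow> fst q x = 0"
  by (induction rule: ineq_cone.induct) auto

lemma ineq_cone_image_multipliers:
  fixes f :: "'i \<Rightarrow> ('v \<Rightarrow> 'a::linordered_field) \<times> 'a"
  assumes "finite I" "q \<in> ineq_cone (f ` I)"
  shows "\<exists>l. (\<forall>i\<in>I. 0 \<le> l i) \<and> (\<forall>j. fst q j = (\<Sum>i\<in>I. l i * fst (f i) j))
           \<and> snd q = (\<Sum>i\<in>I. l i * snd (f i))"
  using assms(2)
proof (induction rule: ineq_cone.induct)
  case ineq_cone_zero
  show ?case by (intro exI[of _ "\<lambda>_. 0"]) simp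
next
  case (ineq_cone_add p c q)
  then obtain l i0 where l: "\<forall>i\<in>I. 0 \<le> l i" "\<forall>j. fst q j = (\<Sum>i\<in>I. l i * fst (f i) j)"
    "snd q = (\<Sum>i\<in>I. l i * snd (f i))" and i0: "i0 \<in> I" "p = f i0" by blast
  have bump: "(\<Sum>i\<in>I. (l i + (if i = i0 then c else 0)) * g i) = (\<Sum>i\<in>I. l i * g i) + c * g i0"
    for g :: "_ \<Rightarrow> 'a"
  proof -
    have "(\<Sum>i\<in>I. (if i = i0 then c else 0) * g i) = (\<Sum>i\<in>I. if i = i0 then c * g i else 0)"
      by (rule sum.cong) auto
    then show ?thesis using assms(1) i0(1) by (simp add: distrib_right sum.distrib)
  qed
  show ?case
    by (intro exI[of _ "\<lambda>i. l i + (if i = i0 then c else 0)"])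
       (use l i0 ineq_cone_add(2) in \<open>simp add: bump\<close>)
qed

lemma finite_sets_separated_by_value:
  fixes f g :: "_ \<Rightarrow> 'a::linorder"
  assumes "finite A" "finite B" "\<forall>a\<in>A. \<forall>b\<in>B. f a \<le> g b"
  shows "\<exists>t. (\<forall>a\<in>A. f a \<le> t) \<and> (\<forall>b\<in>B. t \<le> g b)"
proof (cases "A = {}")
  case True
  then show ?thesis
    using assms by (cases "B = {}") (auto intro!: exI[of _ "Min (g ` B)"])
next
  case False
  then show ?thesis using assms by (intro exI[of _ "Max (f ` A)"]) (auto simp: Max_le_iff)
qed

definition fourier_motzkin_elim ::
    "'v \<Rightarrow> (('v \<Rightarrow> 'a::linordered_field) \<times> 'a) set \<Rightarrow> (('v \<Rightarrow> 'a) \<times> 'a) set" where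
  "fourier_motzkin_elim x S = {p\<in>S. fst p x = 0} \<union>
     (\<lambda>(p, q). (\<lambda>j. - fst q x * fst p j + fst p x * fst q j, - fst q x * snd p + fst p x * snd q))
       ` ({p\<in>S. 0 < fst p x} \<times> {q\<in>S. fst q x < 0})"

lemma finite_fourier_motzkin_elim: "finite S \<Longrightarrow> finite (fourier_motzkin_elim x S)"
  unfolding fourier_motzkin_elim_def by simp

lemma fourier_motzkin_elim_coord_zero: "r \<in> fourier_motzkin_elim x S \<Longrightarrow> fst r x = 0"
  unfolding fourier_motzkin_elim_def by (auto simp: algebra_simps)

lemma fourier_motzkin_elim_subset_ineq_cone: "fourier_motzkin_elim x S \<subseteq> ineq_cone S"
proof
  fix r assume "r \<in> fourier_motzkin_elim x S"
  then consider "r \<in> S" | p q where "p \<in> S" "q \<in> S" "0 < fst p x" "fst q x < 0"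
    "r = (\<lambda>j. - fst q x * fst p j + fst p x * fst q j, - fst q x * snd p + fst p x * snd q)"
    unfolding fourier_motzkin_elim_def by auto
  then show "r \<in> ineq_cone S"
  proof cases
    case 1 then show ?thesis by (rule ineq_cone_base)
  next
    case 2
    from ineq_cone_add[OF 2(2) _ ineq_cone_add[OF 2(1) _ ineq_cone_zero, of "- fst q x"], of "fst p x"] 2
    show ?thesis by simp
  qed
qed

lemma fourier_motzkin_elim_pair_bound:
  fixes S :: "(('v \<Rightarrow> 'a::linordered_field) \<times> 'a) set"
  assumes sol: "\<forall>r\<in>fourier_motzkin_elim x S. ineq_holds F y r"
    and "p \<in> S" "q \<in> S" "0 < fst p x" "fst q x < 0"
  shows "(snd p - (\<Sum>j\<in>F. fst p j * y j)) / fst p x \<le> (snd q - (\<Sum>j\<in>F. fst q j * y j)) / fst q x"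
proof -
  let ?r = "(\<lambda>j. - fst q x * fst p j + fst p x * fst q j, - fst q x * snd p + fst p x * snd q)"
  have "?r \<in> fourier_motzkin_elim x S"
    using assms(2-5) unfolding fourier_motzkin_elim_def by (intro UnI2 image_eqI[of _ _ "(p, q)"]) auto
  with sol have "ineq_holds F y ?r" by blast
  then have "- fst q x * snd p + fst p x * snd q \<le>
      - fst q x * (\<Sum>j\<in>F. fst p j * y j) + fst p x * (\<Sum>j\<in>F. fst q j * y j)"
    unfolding ineq_holds_def
    by (simp add: algebra_simps sum.distrib sum_distrib_left sum_subtractf sum_negf)
  with assms(4,5) show ?thesis
    by (simp add: divide_simps) (simp add: algebra_simps)
qed

lemma fourier_motzkin_elim_solution_extends:
  fixes S :: "(('v \<Rightarrow> 'a::linordered_field) \<times> 'a) set"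
  assumes "finite F" "x \<notin> F" "finite S" and sol: "\<forall>p\<in>fourier_motzkin_elim x S. ineq_holds F y p"
  shows "\<exists>t. \<forall>p\<in>S. ineq_holds (insert x F) (y(x := t)) p"
proof -
  define P where "P = {p\<in>S. 0 < fst p x}"
  define N where "N = {q\<in>S. fst q x < 0}"
  \<comment> \<open>the bound on the new value t imposed by row p: lower if fst p x > 0, upper if fst p x < 0\<close>
  define L where "L p = (snd p - (\<Sum>j\<in>F. fst p j * y j)) / fst p x" for p :: "('v \<Rightarrow> 'a) \<times> 'a"
  have "L p \<le> L q" if "p \<in> P" "q \<in> N" for p q
    using fourier_motzkin_elim_pair_bound[OF sol] that unfolding L_def P_def N_def by blast
  moreover have "finite P" "finite N" using \<open>finite S\<close> unfolding P_def N_def by auto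
  ultimately obtain t where t: "\<forall>p\<in>P. L p \<le> t" "\<forall>q\<in>N. t \<le> L q"
    using finite_sets_separated_by_value by metis
  have "ineq_holds (insert x F) (y(x := t)) p" if "p \<in> S" for p
  proof -
    have eq: "(\<Sum>j\<in>insert x F. fst p j * (y(x := t)) j) = fst p x * t + (\<Sum>j\<in>F. fst p j * y j)"
      using assms(1,2) by (simp add: sum.insert) (intro sum.cong, auto)
    consider "fst p x = 0" | "0 < fst p x" | "fst p x < 0" by linarith
    then show ?thesis
    proof cases
      case 1
      then have "p \<in> fourier_motzkin_elim x S"
        using \<open>p \<in> S\<close> unfolding fourier_motzkin_elim_def by auto
      then show ?thesis using sol 1 eq unfolding ineq_holds_def by auto
    next
      case 2
      then have "L p \<le> t" using t \<open>p \<in> S\<close> unfolding P_def by blast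
      then show ?thesis using 2 eq unfolding ineq_holds_def L_def
        by (simp add: pos_divide_le_eq algebra_simps)
    next
      case 3
      then have "t \<le> L p" using t \<open>p \<in> S\<close> unfolding N_def by blast
      then show ?thesis using 3 eq unfolding ineq_holds_def L_def
        by (simp add: neg_le_divide_eq algebra_simps)
    qed
  qed
  then show ?thesis by blast
qed

lemma fourier_motzkin_cone:
  assumes "finite V" "finite S" "\<nexists>y. \<forall>p\<in>S. ineq_holds V y p"
  shows "\<exists>q\<in>ineq_cone S. (\<forall>j\<in>V. fst q j = 0) \<and> 0 < snd q"
  using assms
proof (induction V arbitrary: S rule: finite_induct)
  case empty
  then obtain p where "p \<in> S" "0 < snd p" by (auto simp: ineq_holds_def not_le)
  then show ?case using ineq_cone_base by blast
next
  case (insert x F)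
  have "\<nexists>y. \<forall>p\<in>fourier_motzkin_elim x S. ineq_holds F y p"
    using fourier_motzkin_elim_solution_extends[OF insert.hyps insert.prems(1)] insert.prems(2)
    by blast
  from insert.IH[OF finite_fourier_motzkin_elim[OF insert.prems(1)] this]
  obtain q where q: "q \<in> ineq_cone (fourier_motzkin_elim x S)" "\<forall>j\<in>F. fst q j = 0" "0 < snd q"
    by blast
  have "fst q x = 0" using ineq_cone_coord_zero[OF q(1)] fourier_motzkin_elim_coord_zero by metis
  with q ineq_cone_trans[OF q(1) fourier_motzkin_elim_subset_ineq_cone] show ?case by auto
qed

theorem infeasible_imp_nonneg_multipliers:
  fixes f :: "'i \<Rightarrow> ('v \<Rightarrow> 'a::linordered_field) \<times> 'a"
  assumes "finite V" "finite I" "\<nexists>y. \<forall>i\<in>I. ineq_holds V y (f i)"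
  shows "\<exists>l. (\<forall>i\<in>I. 0 \<le> l i) \<and> (\<forall>j\<in>V. (\<Sum>i\<in>I. l i * fst (f i) j) = 0)
           \<and> 0 < (\<Sum>i\<in>I. l i * snd (f i))"
proof -
  obtain q where "q \<in> ineq_cone (f ` I)" "\<forall>j\<in>V. fst q j = 0" "0 < snd q"
    using fourier_motzkin_cone[of V "f ` I"] assms by auto
  with ineq_cone_image_multipliers[OF assms(2) this(1)] show ?thesis by auto
qed

lemma sum_UNIV_Plus:
  "(\<Sum>k\<in>UNIV. f k) = (\<Sum>i\<in>UNIV. f (Inl i)) + (\<Sum>j\<in>UNIV. f (Inr j))"
  for f :: "'a::finite + 'b::finite \<Rightarrow> 'c::comm_monoid_add"
  by (simp flip: UNIV_Plus_UNIV add: sum.Plus comp_def)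

lemma sum_UNIV_option_Plus:
  "(\<Sum>k\<in>UNIV. f k) = f None + (\<Sum>i\<in>UNIV. f (Some (Inl i))) + (\<Sum>j\<in>UNIV. f (Some (Inr j)))"
  for f :: "('a::finite + 'b::finite) option \<Rightarrow> 'c::comm_monoid_add"
  by (simp add: UNIV_option_conv sum.reindex sum_UNIV_Plus add.assoc)

lemma sum_unit_vector_mult:
  fixes f :: "'a::finite \<Rightarrow> 'b::semiring_1"
  shows "(\<Sum>k\<in>UNIV. (if k = i then 1 else 0) * f k) = f i"
    and "(\<Sum>k\<in>UNIV. f k * (if i = k then 1 else 0)) = f i"
  by (simp_all add: if_distrib[where f = "\<lambda>a. a * _"] if_distrib[where f = "\<lambda>a. _ * a"]
      cong: if_cong)

definition lp_feasible :: "('i \<Rightarrow> 'k \<Rightarrow> 'a::linordered_field) \<Rightarrow> ('i \<Rightarrow> 'a) \<Rightarrow> ('k \<Rightarrow> 'a) \<Rightarrow> bool" where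
  "lp_feasible A b w \<longleftrightarrow> (\<forall>k. 0 \<le> w k) \<and> (\<forall>i. b i \<le> (\<Sum>k\<in>UNIV. A i k * w k))"

lemma certificate_bounds_objective:
  fixes A :: "'i::finite \<Rightarrow> 'k::finite \<Rightarrow> 'a::linordered_field"
  assumes y: "\<forall>i. 0 \<le> y i" "\<forall>k. (\<Sum>i\<in>UNIV. A i k * y i) \<le> c k" "d \<le> (\<Sum>i\<in>UNIV. b i * y i)"
    and w: "lp_feasible A b w"
  shows "d \<le> (\<Sum>k\<in>UNIV. c k * w k)"
proof -
  have "d \<le> (\<Sum>i\<in>UNIV. b i * y i)" by fact
  also have "\<dots> \<le> (\<Sum>i\<in>UNIV. (\<Sum>k\<in>UNIV. A i k * w k) * y i)"
    using y(1) w by (intro sum_mono mult_right_mono) (auto simp: lp_feasible_def)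
  also have "\<dots> = (\<Sum>k\<in>UNIV. (\<Sum>i\<in>UNIV. A i k * y i) * w k)"
    by (simp add: sum_distrib_left sum_distrib_right mult_ac) (rule sum.swap)
  also have "\<dots> \<le> (\<Sum>k\<in>UNIV. c k * w k)"
    using y(2) w by (intro sum_mono mult_right_mono) (auto simp: lp_feasible_def)
  finally show ?thesis .
qed

lemma implied_bound_homogeneous:
  fixes A :: "'i::finite \<Rightarrow> 'k::finite \<Rightarrow> 'a::linordered_field"
  assumes w0: "lp_feasible A b w0"
    and implied: "\<And>w. lp_feasible A b w \<Longrightarrow> d \<le> (\<Sum>k\<in>UNIV. c k * w k)"
    and z: "\<forall>k. 0 \<le> z k" "0 \<le> \<kappa>" "\<forall>i. \<kappa> * b i \<le> (\<Sum>k\<in>UNIV. A i k * z k)"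
  shows "\<kappa> * d \<le> (\<Sum>k\<in>UNIV. c k * z k)"
proof (cases "\<kappa> = 0")
  case True
  show ?thesis
  proof (rule ccontr)
    assume "\<not> ?thesis"
    with True have neg: "(\<Sum>k\<in>UNIV. c k * z k) < 0" by simp
    define t where "t = (\<bar>d - (\<Sum>k\<in>UNIV. c k * w0 k)\<bar> + 1) / - (\<Sum>k\<in>UNIV. c k * z k)"
    have "0 \<le> t" using neg unfolding t_def by (intro divide_nonneg_pos) auto
    have "d \<le> (\<Sum>k\<in>UNIV. c k * (w0 k + t * z k))"
    proof (rule implied, unfold lp_feasible_def, intro conjI allI)
      fix k show "0 \<le> w0 k + t * z k" using w0 z(1) \<open>0 \<le> t\<close> by (simp add: lp_feasible_def)
    next
      fix i
      have "0 \<le> t * (\<Sum>k\<in>UNIV. A i k * z k)" using z(3) True \<open>0 \<le> t\<close> by simp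
      then show "b i \<le> (\<Sum>k\<in>UNIV. A i k * (w0 k + t * z k))"
        using w0 by (simp add: lp_feasible_def algebra_simps sum.distrib sum_distrib_left add_increasing2)
    qed
    also have "\<dots> = (\<Sum>k\<in>UNIV. c k * w0 k) + t * (\<Sum>k\<in>UNIV. c k * z k)"
      by (simp add: algebra_simps sum.distrib sum_distrib_left)
    also have "t * (\<Sum>k\<in>UNIV. c k * z k) = - (\<bar>d - (\<Sum>k\<in>UNIV. c k * w0 k)\<bar> + 1)"
      using neg unfolding t_def by simp
    finally show False by linarith
  qed
next
  case False
  with z(2) have "0 < \<kappa>" by simp
  have "d \<le> (\<Sum>k\<in>UNIV. c k * (z k / \<kappa>))"
  proof (rule implied, unfold lp_feasible_def, intro conjI allI)
    fix k show "0 \<le> z k / \<kappa>" using z(1) \<open>0 < \<kappa>\<close> by simp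
  next
    fix i show "b i \<le> (\<Sum>k\<in>UNIV. A i k * (z k / \<kappa>))"
      using z(3) \<open>0 < \<kappa>\<close> by (simp add: sum_divide_distrib[symmetric] pos_le_divide_eq mult.commute)
  qed
  then show ?thesis
    using \<open>0 < \<kappa>\<close> by (simp add: sum_divide_distrib[symmetric] pos_le_divide_eq mult.commute)
qed

lemma implied_bound_has_certificate:
  fixes A :: "'i::finite \<Rightarrow> 'k::finite \<Rightarrow> 'a::linordered_field"
  assumes w0: "lp_feasible A b w0"
    and implied: "\<And>w. lp_feasible A b w \<Longrightarrow> d \<le> (\<Sum>k\<in>UNIV. c k * w k)"
  shows "\<exists>y. (\<forall>i. 0 \<le> y i) \<and> (\<forall>k. (\<Sum>i\<in>UNIV. A i k * y i) \<le> c k) \<and> d \<le> (\<Sum>i\<in>UNIV. b i * y i)"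
proof (rule ccontr)
  assume no_certificate: "\<not> ?thesis"
  \<comment> \<open>the dual system y \<ge> 0, transpose(A) y \<le> c, b\<cdot>y \<ge> d, one inequality per index\<close>
  define gen :: "('i + 'k) option \<Rightarrow> ('i \<Rightarrow> 'a) \<times> 'a" where
    "gen = case_option (b, d)
             (case_sum (\<lambda>i. (\<lambda>j. if j = i then 1 else 0, 0)) (\<lambda>k. (\<lambda>i. - A i k, - c k)))"
  have "\<nexists>y. \<forall>g\<in>UNIV. ineq_holds UNIV y (gen g)"
  proof
    assume "\<exists>y. \<forall>g\<in>UNIV. ineq_holds UNIV y (gen g)"
    then obtain y where y: "\<And>g. ineq_holds UNIV y (gen g)" by blast
    have "0 \<le> y i" for i
      using y[of "Some (Inl i)"] by (simp add: gen_def ineq_holds_def sum_unit_vector_mult)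
    moreover have "(\<Sum>i\<in>UNIV. A i k * y i) \<le> c k" for k
      using y[of "Some (Inr k)"] by (simp add: gen_def ineq_holds_def sum_negf)
    moreover have "d \<le> (\<Sum>i\<in>UNIV. b i * y i)"
      using y[of None] by (simp add: gen_def ineq_holds_def)
    ultimately show False using no_certificate by blast
  qed
  then obtain l where l: "\<forall>g. 0 \<le> l g" "\<forall>j. (\<Sum>g\<in>UNIV. l g * fst (gen g) j) = 0"
    "0 < (\<Sum>g\<in>UNIV. l g * snd (gen g))"
    using infeasible_imp_nonneg_multipliers[of UNIV UNIV gen] by auto
  define z where "z k = l (Some (Inr k))" for k
  have "l None * d \<le> (\<Sum>k\<in>UNIV. c k * z k)"
  proof (rule implied_bound_homogeneous[OF w0 implied])
    show "\<forall>k. 0 \<le> z k" "0 \<le> l None" using l(1) unfolding z_def by simp_all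
    show "\<forall>j. l None * b j \<le> (\<Sum>k\<in>UNIV. A j k * z k)"
    proof
      fix j
      have "0 = (\<Sum>g\<in>UNIV. l g * fst (gen g) j)" using l(2) by simp
      also have "\<dots> = l None * b j + l (Some (Inl j)) - (\<Sum>k\<in>UNIV. A j k * z k)"
        by (simp add: sum_UNIV_option_Plus gen_def z_def sum_unit_vector_mult sum_negf mult.commute)
      finally show "l None * b j \<le> (\<Sum>k\<in>UNIV. A j k * z k)"
        using l(1) by (metis add_increasing2 eq_iff_diff_eq_0 order_refl)
    qed
  qed
  moreover have "(\<Sum>g\<in>UNIV. l g * snd (gen g)) = l None * d - (\<Sum>k\<in>UNIV. c k * z k)"
    by (simp add: sum_UNIV_option_Plus gen_def z_def sum_negf mult.commute)
  ultimately show False using l(3) by simp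
qed

theorem affine_farkas:
  fixes A :: "'i::finite \<Rightarrow> 'k::finite \<Rightarrow> 'a::linordered_field"
  assumes "\<exists>w. lp_feasible A b w"
  shows "(\<forall>w. lp_feasible A b w \<longrightarrow> d \<le> (\<Sum>k\<in>UNIV. c k * w k)) \<longleftrightarrow>
         (\<exists>y. (\<forall>i. 0 \<le> y i) \<and> (\<forall>k. (\<Sum>i\<in>UNIV. A i k * y i) \<le> c k) \<and> d \<le> (\<Sum>i\<in>UNIV. b i * y i))"
    (is "?implied \<longleftrightarrow> ?certified")
proof
  assume ?implied
  from assms obtain w0 where "lp_feasible A b w0" ..
  from implied_bound_has_certificate[OF this] \<open>?implied\<close> show ?certified by blast
next
  assume ?certified
  then obtain y where "\<forall>i. 0 \<le> y i" "\<forall>k. (\<Sum>i\<in>UNIV. A i k * y i) \<le> c k" "d \<le> (\<Sum>i\<in>UNIV. b i * y i)"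
    by blast
  from certificate_bounds_objective[OF this] show ?implied by blast
qed

lemma ratmat_mult_vec_nth: "(ratmat A *v w) $ i = (\<Sum>k\<in>UNIV. of_int (A $ i $ k) * w $ k)"
  by (simp add: matrix_vector_mult_def ratmat_def)

lemma transpose_ratmat_mult_vec_nth:
  "(transpose (ratmat A) *v y) $ k = (\<Sum>i\<in>UNIV. of_int (A $ i $ k) * y $ i)"
  by (simp add: matrix_vector_mult_def transpose_def ratmat_def mult.commute)

lemma vcat_nth [simp]: "vcat v w $ Inl i = v $ i" "vcat v w $ Inr j = w $ j"
  by (simp_all add: vcat_def)

lemma all_vcat_iff:
  fixes P :: "('n::finite + 'k::finite \<Rightarrow> 'a) \<Rightarrow> bool"
  shows "(\<forall>x x'. P (vec_nth (vcat x x'))) \<longleftrightarrow> (\<forall>w. P w)"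
proof (intro iffI allI)
  fix w :: "'n + 'k \<Rightarrow> 'a"
  assume "\<forall>x x'. P (vec_nth (vcat x x'))"
  moreover have "vec_nth (vcat (\<chi> i. w (Inl i)) (\<chi> i. w (Inr i))) = w"
    by (simp add: fun_eq_iff split_sum_all)
  ultimately show "P w" by metis
qed simp

lemma ex_vcat_iff:
  fixes P :: "('n::finite + 'k::finite \<Rightarrow> 'a) \<Rightarrow> bool"
  shows "(\<exists>x x'. P (vec_nth (vcat x x'))) \<longleftrightarrow> (\<exists>w. P w)"
  using all_vcat_iff[of "Not \<circ> P"] by auto

lemma vnonneg_vcat: "vnonneg (vcat x x') \<longleftrightarrow> vnonneg x \<and> vnonneg x'"
  unfolding vnonneg_def split_sum_all by simp

lemma constr_vcat_lp_feasible:
  "vnonneg x \<and> vnonneg x' \<and> constr A b x x' \<longleftrightarrow>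
   lp_feasible (\<lambda>i k. of_int (A $ i $ k)) (\<lambda>i. of_int (b $ i)) (vec_nth (vcat x x'))"
  unfolding conj_assoc[symmetric] vnonneg_vcat[symmetric]
  by (simp add: lp_feasible_def vnonneg_def constr_def vle_def ratvec_def ratmat_mult_vec_nth)

lemma sum_vcat_neg_mult_vcat:
  "(\<Sum>k\<in>UNIV. vcat \<mu> (- \<mu>) $ k * vcat x x' $ k) =
   (\<Sum>i\<in>UNIV. \<mu> $ i * x $ i) - (\<Sum>i\<in>UNIV. \<mu> $ i * x' $ i)"
  for \<mu> x x' :: "'a::comm_ring^'n::finite"
  by (simp add: sum_UNIV_Plus sum_negf)

lemma plrf_iff:
  fixes A :: "int^('n::finite + 'n)^'m::finite" and b :: "int^'m"
  shows "\<mu> \<in> plrf A b \<longleftrightarrow> vnonneg \<mu> \<and>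
     (\<forall>w. lp_feasible (\<lambda>i k. of_int (A $ i $ k)) (\<lambda>i. of_int (b $ i)) w \<longrightarrow>
        1 \<le> (\<Sum>k\<in>UNIV. vcat \<mu> (- \<mu>) $ k * w k))"
  unfolding plrf_def mem_Collect_eq constr_vcat_lp_feasible sum_vcat_neg_mult_vcat[symmetric]
  by (rule arg_cong[OF all_vcat_iff])

lemma svg_iff:
  fixes A :: "int^('n::finite + 'n)^'m::finite" and b :: "int^'m"
  shows "\<mu> \<in> svg A b \<longleftrightarrow> vnonneg \<mu> \<and>
     (\<exists>y. (\<forall>i. 0 \<le> y i) \<and> (\<forall>k. (\<Sum>i\<in>UNIV. of_int (A $ i $ k) * y i) \<le> vcat \<mu> (- \<mu>) $ k)
        \<and> 1 \<le> (\<Sum>i\<in>UNIV. of_int (b $ i) * y i))"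
proof -
  have "(\<exists>y :: rat^'m. P (vec_nth y)) \<longleftrightarrow> (\<exists>y. P y)" for P
    by (metis vec_lambda_inverse UNIV_I)
  then show ?thesis
    unfolding svg_def mem_Collect_eq vnonneg_def vle_def transpose_ratmat_mult_vec_nth ratvec_def
      vec_lambda_beta
    by (rule arg_cong)
qed

theorem theorem1:
  fixes A :: "int^('n::finite + 'n)^('m::finite)" and b :: "int^'m"
  assumes "\<exists>x x' :: rat^'n. vnonneg x \<and> vnonneg x' \<and> constr A b x x'"
  shows "plrf A b = svg A b"
proof (rule set_eqI)
  fix \<mu>
  have "\<exists>w :: 'n + 'n \<Rightarrow> rat. lp_feasible (\<lambda>i k. of_int (A $ i $ k)) (\<lambda>i. of_int (b $ i)) w"
    using assms unfolding constr_vcat_lp_feasible ex_vcat_iff .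
  from affine_farkas[OF this, of 1 "\<lambda>k. vcat \<mu> (- \<mu>) $ k"]
  show "\<mu> \<in> plrf A b \<longleftrightarrow> \<mu> \<in> svg A b"
    unfolding plrf_iff svg_iff by (rule arg_cong)
qed

end
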